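(* Let $X>0$ and let $w:[0,X]\to\mathbb{R}$ be a smooth function with $w''(x)\ge w(x)$ and $w(x)\ge0$ for all $x\in[0,X]$, and $w'(0)\ge0$. Then for all $x,y\ge0$ with $x+y\le X$, $w(x+y)\ge w(x)\cosh(y)$. *)

theory Defs
  imports "HOL-Analysis.Analysis"
begin

text \<open>Smoothness on a closed interval S: a sequence of functions D with D 0 = w and
  D (Suc k) the derivative of D k at every point of S, taken within S
  (one-sided at the endpoints).\<close>
definition smooth_derivs_on :: "real set \<Rightarrow> (nat \<Rightarrow> real \<Rightarrow> real) \<Rightarrow> (real \<Rightarrow> real) \<Rightarrow> bool" where
  "smooth_derivs_on S D w \<longleftrightarrow> (\<forall>x\<in>S. D 0 x = w x) \<and>
     (\<forall>k. \<forall>x\<in>S. (D k has_real_derivative D (Suc k) x) (at x within S))"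

end

theory Submission
  imports Defs
begin

text \<open>Fix \<open>x\<close> and compare \<open>w\<close> on \<open>[x, X]\<close> with \<open>w x \<cdot> cosh (t - x)\<close>. The difference
  \<open>h\<close> satisfies \<open>h'' \<ge> h\<close>, \<open>h x = 0\<close> and \<open>h' x = w' x \<ge> 0\<close>, the latter because \<open>w'' \<ge> w \<ge> 0\<close>
  makes \<open>w'\<close> nondecreasing from \<open>w' 0 \<ge> 0\<close>. Factoring \<open>h'' - h = (d/dt + 1)(d/dt - 1) h\<close>,
  the function \<open>e\<^sup>-\<^sup>t (h' + h)\<close> is nondecreasing, so \<open>h' + h \<ge> 0\<close>; then \<open>e\<^sup>t h\<close> is
  nondecreasing, so \<open>h \<ge> 0\<close>.\<close>

lemma mono_on_Icc_if_has_real_derivative_nonneg: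
  fixes f f' :: "real \<Rightarrow> real"
  assumes deriv: "\<And>t. t \<in> {a..b} \<Longrightarrow> (f has_real_derivative f' t) (at t within {a..b})"
    and nonneg: "\<And>t. t \<in> {a..b} \<Longrightarrow> f' t \<ge> 0"
  shows "mono_on {a..b} f"
proof (rule mono_onI)
  fix s t assume st: "s \<in> {a..b}" "t \<in> {a..b}" "s \<le> t"
  have cont: "continuous_on {a..b} f"
    using deriv by (meson DERIV_continuous continuous_on_eq_continuous_within)
  show "f s \<le> f t"
  proof (rule DERIV_nonneg_imp_increasing_open[OF \<open>s \<le> t\<close>])
    fix u assume u: "s < u" "u < t"
    with st have "a < u" "u < b" "u \<in> {a..b}" by auto
    then have "(f has_real_derivative f' u) (at u)"
      using deriv at_within_Icc_at by metis
    then show "\<exists>y. (f has_real_derivative y) (at u) \<and> y \<ge> 0"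
      using nonneg \<open>u \<in> {a..b}\<close> by blast
  next
    show "continuous_on {s..t} f"
      using cont st by (auto intro: continuous_on_subset)
  qed
qed

lemma nonneg_if_deriv2_ge_self:
  fixes f f' f'' :: "real \<Rightarrow> real"
  assumes f: "\<And>t. t \<in> {a..b} \<Longrightarrow> (f has_real_derivative f' t) (at t within {a..b})"
    and f': "\<And>t. t \<in> {a..b} \<Longrightarrow> (f' has_real_derivative f'' t) (at t within {a..b})"
    and f'': "\<And>t. t \<in> {a..b} \<Longrightarrow> f'' t \<ge> f t"
    and "f a \<ge> 0" "f' a + f a \<ge> 0"
    and t: "t \<in> {a..b}"
  shows "f t \<ge> 0"
proof -
  have a: "a \<in> {a..b}" using t by simp
  have mono_sum: "mono_on {a..b} (\<lambda>s. exp (a - s) * (f' s + f s))"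
  proof (rule mono_on_Icc_if_has_real_derivative_nonneg)
    fix s assume s: "s \<in> {a..b}"
    show "((\<lambda>s. exp (a - s) * (f' s + f s)) has_real_derivative
        exp (a - s) * (f'' s - f s)) (at s within {a..b})"
      by (rule derivative_eq_intros f[OF s] f'[OF s] refl)+ (simp add: algebra_simps)
    show "exp (a - s) * (f'' s - f s) \<ge> 0"
      using f'' s by simp
  qed
  have sum_nonneg: "f' s + f s \<ge> 0" if "s \<in> {a..b}" for s
  proof -
    have "0 \<le> exp (a - s) * (f' s + f s)"
      using mono_onD[OF mono_sum a that] that \<open>f' a + f a \<ge> 0\<close> by simp
    then show ?thesis
      by (simp add: zero_le_mult_iff)
  qed
  have "mono_on {a..b} (\<lambda>s. exp (s - a) * f s)"
  proof (rule mono_on_Icc_if_has_real_derivative_nonneg)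
    fix s assume s: "s \<in> {a..b}"
    show "((\<lambda>s. exp (s - a) * f s) has_real_derivative
        exp (s - a) * (f' s + f s)) (at s within {a..b})"
      by (rule derivative_eq_intros f[OF s] refl)+ (simp add: algebra_simps)
    show "exp (s - a) * (f' s + f s) \<ge> 0"
      using sum_nonneg s by simp
  qed
  then have "0 \<le> exp (t - a) * f t"
    using mono_onD[OF _ a t] t \<open>f a \<ge> 0\<close> by fastforce
  then show ?thesis
    by (simp add: zero_le_mult_iff)
qed

lemma cosh_lower_bound_if_deriv2_ge_self:
  fixes w w' w'' :: "real \<Rightarrow> real"
  assumes w: "\<And>t. t \<in> {a..b} \<Longrightarrow> (w has_real_derivative w' t) (at t within {a..b})"
    and w': "\<And>t. t \<in> {a..b} \<Longrightarrow> (w' has_real_derivative w'' t) (at t within {a..b})"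
    and w'': "\<And>t. t \<in> {a..b} \<Longrightarrow> w'' t \<ge> w t"
    and "w' a \<ge> 0"
    and t: "t \<in> {a..b}"
  shows "w t \<ge> w a * cosh (t - a)"
proof -
  have "w t - w a * cosh (t - a) \<ge> 0"
  proof (rule nonneg_if_deriv2_ge_self[where f' = "\<lambda>s. w' s - w a * sinh (s - a)"
        and f'' = "\<lambda>s. w'' s - w a * cosh (s - a)", OF _ _ _ _ _ t])
    fix s assume s: "s \<in> {a..b}"
    show "((\<lambda>s. w s - w a * cosh (s - a)) has_real_derivative
        w' s - w a * sinh (s - a)) (at s within {a..b})"
      by (rule derivative_eq_intros w[OF s] refl)+ simp
    show "((\<lambda>s. w' s - w a * sinh (s - a)) has_real_derivative
        w'' s - w a * cosh (s - a)) (at s within {a..b})"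
      by (rule derivative_eq_intros w'[OF s] refl)+ simp
    show "w'' s - w a * cosh (s - a) \<ge> w s - w a * cosh (s - a)"
      using w'' s by simp
  qed (use \<open>w' a \<ge> 0\<close> in simp_all)
  then show ?thesis by simp
qed

lemma smooth_derivs_on_subset:
  assumes "smooth_derivs_on S D w" "T \<subseteq> S" "t \<in> T"
  shows "(D k has_real_derivative D (Suc k) t) (at t within T)"
  using assms unfolding smooth_derivs_on_def by (blast intro: DERIV_subset)

theorem lemma5p3:
  fixes X :: real and w :: "real \<Rightarrow> real" and D :: "nat \<Rightarrow> real \<Rightarrow> real"
  assumes "X > 0"
    and "smooth_derivs_on {0..X} D w"
    and "\<forall>x\<in>{0..X}. D 2 x \<ge> w x"
    and "\<forall>x\<in>{0..X}. w x \<ge> 0"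
    and "D 1 0 \<ge> 0"
  shows "\<forall>x y. x \<ge> 0 \<longrightarrow> y \<ge> 0 \<longrightarrow> x + y \<le> X \<longrightarrow> w (x + y) \<ge> w x * cosh y"
proof (intro allI impI)
  have D0: "\<And>t. t \<in> {0..X} \<Longrightarrow> D 0 t = w t"
    using assms(2) unfolding smooth_derivs_on_def by blast
  have deriv: "(D k has_real_derivative D (Suc k) t) (at t within T)"
    if "T \<subseteq> {0..X}" "t \<in> T" for k t T
    using smooth_derivs_on_subset[OF assms(2) that] .
  have D1_mono: "mono_on {0..X} (D 1)"
  proof (rule mono_on_Icc_if_has_real_derivative_nonneg)
    fix t assume t: "t \<in> {0..X}"
    show "(D 1 has_real_derivative D 2 t) (at t within {0..X})"
      using deriv[of "{0..X}" t 1] t by (simp add: numeral_2_eq_2)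
    show "D 2 t \<ge> 0"
      using assms(3,4) t by (meson order_trans)
  qed
  have D1_nonneg: "D 1 t \<ge> 0" if "t \<in> {0..X}" for t
    using mono_onD[OF D1_mono _ that] that assms(1,5) by fastforce
  fix x y :: real
  assume "x \<ge> 0" "y \<ge> 0" "x + y \<le> X"
  then have sub: "{x..x + y} \<subseteq> {0..X}" by auto
  have "D 0 (x + y) \<ge> D 0 x * cosh (x + y - x)"
  proof (rule cosh_lower_bound_if_deriv2_ge_self[where w' = "D 1" and w'' = "D 2"])
    fix t assume t: "t \<in> {x..x + y}"
    show "(D 0 has_real_derivative D 1 t) (at t within {x..x + y})"
      using deriv[OF sub t, of 0] by (simp add: One_nat_def)
    show "(D 1 has_real_derivative D 2 t) (at t within {x..x + y})"
      using deriv[OF sub t, of 1] by (simp add: numeral_2_eq_2)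
    show "D 2 t \<ge> D 0 t"
      using assms(3) D0 t sub by auto
  qed (use D1_nonneg sub \<open>y \<ge> 0\<close> in auto)
  then show "w (x + y) \<ge> w x * cosh y"
    using D0 sub \<open>y \<ge> 0\<close> by simp
qed

end
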